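(* Let $(A,B)$ be an $n\times n$ definite pencil and suppose $U\in\mathbb{C}^{n\times k}$ has orthonormal columns spanning a right deflating subspace of $(A,B)$. For any $\epsilon>0$ and any $0<\epsilon'\le\epsilon\left(1+\frac{\|(A,B)\|_2}{\gamma(A,B)}\right)^{-1}$ we have $$\Lambda^{\mathrm{sym}}_{\epsilon'}(U^HAU,U^HBU)\subseteq\Lambda^{\mathrm{sym}}_\epsilon(A,B).$$
   Context: A pencil $(A,B)$ of $n\times n$ complex matrices is definite if $A,B$ are Hermitian and $\gamma(A,B)=\min_{\|x\|_2=1}|x^H(A+iB)x|>0$. A $k$-dimensional subspace $\mathcal X\subseteq\mathbb{C}^n$ is a right deflating subspace of $(A,B)$ if $\dim(A\mathcal X+B\mathcal X)\le k$ (for a definite pencil, equivalently, $\mathcal X$ is spanned by $k$ columns of a nonsingular $X$ with $X^HAX$ and $X^HBX$ diagonal). $\|(A,B)\|_2$ is the spectral norm of the $n\times2n$ matrix $[A,\ B]$. For Hermitian $A,B$ (of any size) and $\delta>0$, $\Lambda^{\mathrm{sym}}_\delta(A,B)=\{z\in\mathbb{C}:(A+E)u=z(B+F)u$ for some $u\ne0$ and Hermitian $E,F$ with $\sqrt{\|E\|_2^2+\|F\|_2^2}\le\delta\}$. *)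

theory Defs
  imports "HOL-Analysis.Analysis"
begin

definition cadj :: "complex^'n^'m \<Rightarrow> complex^'m^'n" where
  "cadj M = (\<chi> i j. cnj (M $ j $ i))"

definition hermitian :: "complex^'n^'n \<Rightarrow> bool" where
  "hermitian M \<longleftrightarrow> cadj M = M"

definition qform :: "complex^'n^'n \<Rightarrow> complex^'n \<Rightarrow> complex" where
  "qform M x = (\<Sum>i\<in>UNIV. cnj (x $ i) * (M *v x) $ i)"

text \<open>Spectral norm (operator 2-norm; the norm on complex^'n is the Euclidean norm).\<close>
definition specnorm :: "complex^'n^'m \<Rightarrow> real" where
  "specnorm M = onorm (\<lambda>x. M *v x)"

text \<open>Spectral norm of the n x 2n matrix [A, B]; the product norm is sqrt(|x|^2+|y|^2).\<close>
definition pencil_norm :: "complex^'n^'m \<Rightarrow> complex^'n^'m \<Rightarrow> real" where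
  "pencil_norm A B = onorm (\<lambda>(x, y). A *v x + B *v y)"

definition crawford :: "complex^'n^'n \<Rightarrow> complex^'n^'n \<Rightarrow> real" where
  "crawford A B = Inf {cmod (qform (A + (\<chi> i j. \<i> * B $ i $ j)) x) | x. norm x = 1}"

definition definite_pencil :: "complex^'n^'n \<Rightarrow> complex^'n^'n \<Rightarrow> bool" where
  "definite_pencil A B \<longleftrightarrow> hermitian A \<and> hermitian B \<and> crawford A B > 0"

definition right_deflating :: "complex^'n^'n \<Rightarrow> complex^'n^'n \<Rightarrow> (complex^'n) set \<Rightarrow> bool" where
  "right_deflating A B X \<longleftrightarrow> vec.subspace X \<and>
     vec.dim {A *v x + B *v y | x y. x \<in> X \<and> y \<in> X} \<le> vec.dim X"

definition sym_pseudospec :: "real \<Rightarrow> complex^'m^'m \<Rightarrow> complex^'m^'m \<Rightarrow> complex set" where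
  "sym_pseudospec \<delta> A B = {z. \<exists>u E F. u \<noteq> 0 \<and> hermitian E \<and> hermitian F \<and>
      sqrt ((specnorm E)\<^sup>2 + (specnorm F)\<^sup>2) \<le> \<delta> \<and>
      (A + E) *v u = z *s ((B + F) *v u)}"

end

theory Submission
  imports Defs
begin

(* Write Q(v) = v^H (A + iB) v, so that gamma |v|^2 <= |Q(v)| <= ||(A,B)|| |v|^2.
   The lower bound makes the compression U^H (A + iB) U invertible; then (A + iB) U is injective
   and the deflating property forces range (A U) and range (B U) into range ((A + iB) U).
   Hence A U = K (U^H A U) and B U = K (U^H B U) for K = (A + iB) U (U^H (A + iB) U)^-1,
   with U^H K = I. A perturbation (E, F) of the compressed pencil with eigenvector u thus lifts
   to the Hermitian perturbation (K E K^H, K F K^H) of (A, B) with eigenvector U u, and it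
   remains to show ||K||^2 <= ||(A,B)|| / gamma. For any y, the vector w = y - U K^H y is A- and
   B-orthogonal to range U, so with x = U K^H y we get Q(x + w) = Q(x - w) = Q(x) + Q(w), and
   the parallelogram law yields gamma |K^H y|^2 <= |Q(y)| <= ||(A,B)|| |y|^2. *)

definition cinner :: "complex^'n \<Rightarrow> complex^'n \<Rightarrow> complex" where
  "cinner x y = (\<Sum>i\<in>UNIV. cnj (x $ i) * y $ i)"

lemma cinner_adjoint: "cinner (M *v x) y = cinner x (cadj M *v y)"
proof -
  have "cinner (M *v x) y = (\<Sum>i\<in>UNIV. \<Sum>j\<in>UNIV. cnj (M$i$j) * cnj (x$j) * y$i)"
    unfolding cinner_def matrix_vector_mult_def by (simp add: sum_distrib_right)
  also have "\<dots> = (\<Sum>j\<in>UNIV. \<Sum>i\<in>UNIV. cnj (M$i$j) * cnj (x$j) * y$i)"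
    by (rule sum.swap)
  also have "\<dots> = cinner x (cadj M *v y)"
    unfolding cinner_def matrix_vector_mult_def cadj_def
    by (simp add: sum_distrib_left mult_ac)
  finally show ?thesis .
qed

lemma cnj_cinner: "cnj (cinner x y) = cinner y x"
  unfolding cinner_def by (simp add: mult.commute)

lemma Re_cinner: "Re (cinner x y) = inner x y"
  unfolding cinner_def inner_vec_def inner_complex_def by (simp add: Re_sum)

lemma cinner_self: "cinner x x = of_real ((norm x)\<^sup>2)"
proof -
  have "Im (cinner x x) = 0" unfolding cinner_def by (simp add: Im_sum)
  moreover have "Re (cinner x x) = (norm x)\<^sup>2" by (simp add: Re_cinner power2_norm_eq_inner)
  ultimately show ?thesis by (simp add: complex_eq_iff)
qed

lemma cinner_add_left: "cinner (x + y) z = cinner x z + cinner y z"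
  unfolding cinner_def by (simp add: algebra_simps sum.distrib)

lemma cinner_add_right: "cinner x (y + z) = cinner x y + cinner x z"
  unfolding cinner_def by (simp add: algebra_simps sum.distrib)

lemma cinner_scale_left: "cinner (c *s x) y = cnj c * cinner x y"
  unfolding cinner_def by (simp add: algebra_simps sum_distrib_left)

lemma cinner_scale_right: "cinner x (c *s y) = c * cinner x y"
  unfolding cinner_def by (simp add: algebra_simps sum_distrib_left)

lemma cinner_zero_right [simp]: "cinner x 0 = 0"
  unfolding cinner_def by simp

lemma norm_vector_scalar_mult: "norm (c *s (x::complex^'n)) = cmod c * norm x"
  unfolding norm_vec_def by (simp add: L2_set_right_distrib norm_mult)

lemma qform_eq_cinner: "qform M x = cinner x (M *v x)"
  unfolding qform_def cinner_def by simp

lemma qform_scale: "qform M (c *s x) = cnj c * c * qform M x"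
  unfolding qform_eq_cinner
  by (simp add: vector_scalar_commute cinner_scale_right cinner_scale_left)

lemma cadj_cadj [simp]: "cadj (cadj M) = M"
  unfolding cadj_def by (simp add: vec_eq_iff)

lemma cadj_mult: "cadj (M ** N) = cadj N ** cadj M"
  unfolding cadj_def matrix_matrix_mult_def by (simp add: vec_eq_iff mult.commute)

lemma cadj_mat_1 [simp]: "cadj (mat 1 :: complex^'n^'n) = mat 1"
  unfolding cadj_def mat_def by (simp add: vec_eq_iff)

lemma hermitian_cinner: "hermitian A \<Longrightarrow> cinner x (A *v y) = cinner (A *v x) y"
  unfolding hermitian_def by (simp add: cinner_adjoint)

lemma hermitian_qform_real:
  assumes "hermitian A" shows "qform A x \<in> \<real>"
proof -
  have "cnj (qform A x) = qform A x"
    using assms unfolding qform_eq_cinner by (simp add: cnj_cinner hermitian_cinner)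
  then show ?thesis by (simp add: Reals_cnj_iff)
qed

lemma hermitian_congruence: "hermitian A \<Longrightarrow> hermitian (cadj U ** A ** U)"
  unfolding hermitian_def by (simp add: cadj_mult matrix_mul_assoc)

lemma norm_mult_vec_isometry:
  assumes "cadj U ** U = mat 1"
  shows "norm (U *v x) = norm x"
proof -
  have "cinner (U *v x) (U *v x) = cinner x x"
    by (simp add: cinner_adjoint matrix_vector_mul_assoc assms)
  then have "(norm (U *v x))\<^sup>2 = (norm x)\<^sup>2"
    by (metis cinner_self of_real_eq_iff)
  then show ?thesis by (simp add: power2_eq_iff_nonneg)
qed

lemma norm_matrix_vector_le_specnorm: "norm ((M::complex^'n^'m) *v x) \<le> specnorm M * norm x"
  unfolding specnorm_def
  by (rule onorm) (simp add: linear_conv_bounded_linear matrix_vector_mul_linear)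

lemma specnorm_nonneg: "specnorm (M::complex^'n^'m) \<ge> 0"
  unfolding specnorm_def
  by (rule onorm_pos_le) (simp add: linear_conv_bounded_linear matrix_vector_mul_linear)

lemma bounded_linear_pencil:
  fixes A B :: "complex^'n^'m"
  shows "bounded_linear (\<lambda>(x, y). A *v x + B *v y)"
proof -
  have "linear (\<lambda>(x::complex^'n, y::complex^'n). A *v x + B *v y)"
    by (rule linearI) (auto simp: linear_cmul[OF matrix_vector_mul_linear]
          linear_add[OF matrix_vector_mul_linear] scaleR_right_distrib)
  then show ?thesis by (simp add: linear_conv_bounded_linear)
qed

lemma norm_pencil_le: "norm (A *v x + B *v y) \<le> pencil_norm A B * norm (x, y)"
  using onorm[OF bounded_linear_pencil[of A B], of "(x, y)"] unfolding pencil_norm_def by simp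

lemma pencil_norm_nonneg: "pencil_norm A B \<ge> 0"
  unfolding pencil_norm_def by (rule onorm_pos_le[OF bounded_linear_pencil])

definition cpencil :: "complex^'n^'n \<Rightarrow> complex^'n^'n \<Rightarrow> complex^'n^'n" where
  "cpencil A B = A + (\<chi> i j. \<i> * B $ i $ j)"

lemma cpencil_mult_vec: "cpencil A B *v x = A *v x + \<i> *s (B *v x)"
  unfolding cpencil_def matrix_vector_mult_def
  by (simp add: vec_eq_iff algebra_simps sum.distrib sum_distrib_left)

lemma qform_cpencil: "qform (cpencil A B) x = qform A x + \<i> * qform B x"
  unfolding qform_eq_cinner cpencil_mult_vec by (simp add: cinner_add_right cinner_scale_right)

lemma crawford_le_qform: "crawford A B * (norm x)\<^sup>2 \<le> cmod (qform (cpencil A B) x)"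
proof (cases "x = 0")
  case True
  then show ?thesis by (simp add: qform_def)
next
  case False
  define c where "c = complex_of_real (1 / norm x)"
  have "norm (c *s x) = 1"
    using False by (simp add: c_def norm_vector_scalar_mult norm_divide)
  then have "crawford A B \<le> cmod (qform (cpencil A B) (c *s x))"
    unfolding crawford_def cpencil_def by (intro cInf_lower) (auto intro!: bdd_belowI[where m=0])
  also have "\<dots> = cmod (qform (cpencil A B) x) / (norm x)\<^sup>2"
    using False by (simp add: qform_scale c_def norm_mult power2_eq_square norm_divide)
  finally show ?thesis
    using False by (simp add: field_simps)
qed

lemma qform_cpencil_le_pencil_norm:
  assumes "hermitian A" "hermitian B"
  shows "cmod (qform (cpencil A B) x) \<le> pencil_norm A B * (norm x)\<^sup>2"
proof -
  define a where "a = Re (qform A x)"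
  define b where "b = Re (qform B x)"
  define r where "r = cmod (qform (cpencil A B) x)"
  have qA: "qform A x = of_real a" and qB: "qform B x = of_real b"
    using assms[THEN hermitian_qform_real] by (simp_all add: a_def b_def)
  then have r: "r\<^sup>2 = a\<^sup>2 + b\<^sup>2"
    by (simp add: r_def qform_cpencil cmod_power2)
  \<comment> \<open>Test the pencil on the pair (a x, b x), whose norm is r |x|.\<close>
  have "r\<^sup>2 = Re (cinner x (A *v (of_real a *s x) + B *v (of_real b *s x)))"
    unfolding r
    by (simp add: vector_scalar_commute cinner_add_right cinner_scale_right qA qB
        power2_eq_square flip: qform_eq_cinner)
  also have "\<dots> \<le> norm x * norm (A *v (of_real a *s x) + B *v (of_real b *s x))"
    unfolding Re_cinner by (rule norm_cauchy_schwarz)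
  also have "\<dots> \<le> norm x * (pencil_norm A B * norm (of_real a *s x, of_real b *s x))"
    by (rule mult_left_mono[OF norm_pencil_le]) simp
  also have "norm (of_real a *s x, of_real b *s x) = r * norm x"
    by (simp add: norm_Pair norm_vector_scalar_mult power_mult_distrib
        distrib_right[symmetric] real_sqrt_mult flip: r) (simp add: r_def)
  finally have "r * r \<le> (pencil_norm A B * (norm x)\<^sup>2) * r"
    by (simp add: power2_eq_square mult_ac)
  then have "r \<le> pencil_norm A B * (norm x)\<^sup>2"
    using pencil_norm_nonneg[of A B] by (cases "r = 0") (simp_all add: r_def)
  then show ?thesis
    by (simp add: r_def)
qed

lemma qform_add_orthogonal:
  assumes "hermitian A" "cinner x (A *v w) = 0"
  shows "qform A (x + w) = qform A x + qform A w"
proof -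
  have "cinner w (A *v x) = 0"
    using assms by (metis cnj_cinner complex_cnj_zero hermitian_cinner)
  then show ?thesis
    using assms(2) unfolding qform_eq_cinner
    by (simp add: matrix_vector_right_distrib cinner_add_left cinner_add_right)
qed

lemma parallelogram_law:
  "(norm (x + w))\<^sup>2 + (norm (x - w))\<^sup>2 = 2 * (norm (x::'a::real_inner))\<^sup>2 + 2 * (norm w)\<^sup>2"
  by (simp add: power2_norm_eq_inner inner_add_left inner_add_right inner_diff_left
      inner_diff_right inner_commute)

lemma crawford_le_qform_orthogonal_sum:
  assumes "hermitian A" "hermitian B" "cinner x (A *v w) = 0" "cinner x (B *v w) = 0"
  shows "crawford A B * ((norm x)\<^sup>2 + (norm w)\<^sup>2) \<le> cmod (qform (cpencil A B) (x + w))"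
proof -
  define Q where "Q = qform (cpencil A B) (x + w)"
  have split: "qform (cpencil A B) (x + c *s w)
      = qform (cpencil A B) x + cnj c * c * qform (cpencil A B) w" for c
    using assms unfolding qform_cpencil
    by (simp add: qform_add_orthogonal vector_scalar_commute cinner_scale_right qform_scale
        algebra_simps)
  have "qform (cpencil A B) (x - w) = Q"
    using split[of "-1"] split[of 1] by (simp add: Q_def vector_sneg_minus1[symmetric])
  then have "crawford A B * ((norm (x + w))\<^sup>2 + (norm (x - w))\<^sup>2) \<le> 2 * cmod Q"
    using crawford_le_qform[of A B "x + w"] crawford_le_qform[of A B "x - w"]
    unfolding Q_def by (simp add: distrib_left)
  then show ?thesis
    unfolding parallelogram_law Q_def by (simp add: algebra_simps)
qed

lemma qform_compression: "qform (cadj U ** C ** U) b = qform C (U *v b)"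
  unfolding qform_eq_cinner by (simp add: cinner_adjoint matrix_vector_mul_assoc matrix_mul_assoc)

lemma eq_0_of_qform_lower_bound:
  assumes "g > 0" "\<And>v. g * (norm v)\<^sup>2 \<le> cmod (qform M v)" "M *v b = 0"
  shows "b = 0"
  using assms(2)[of b] assms(1,3) by (simp add: qform_eq_cinner mult_le_0_iff)

lemma dim_range_left_invertible:
  fixes M :: "'a::field^'k^'n"
  assumes "L ** M = mat 1"
  shows "vec.dim (range ((*v) M)) = vec.dim (UNIV :: ('a^'k) set)"
proof (rule vec.dim_image_eq[OF matrix_vector_mul_linear_gen])
  show "inj_on ((*v) M) (vec.span UNIV)"
    by (metis assms inj_on_inverseI matrix_vector_mul_assoc matrix_vector_mul_lid)
qed

lemma eq_mult_of_range_subset: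
  fixes P :: "'a::comm_semiring_1^'j^'n" and C :: "'a^'k^'n"
  assumes "range ((*v) P) \<subseteq> range ((*v) C)" "Mi ** (W ** C) = mat 1"
  shows "P = C ** Mi ** (W ** P)"
proof (rule matrix_eq[THEN iffD2], rule allI)
  fix b
  obtain c where c: "P *v b = C *v c"
    using assms(1) by blast
  have "Mi *v (W *v (P *v b)) = c"
    by (metis assms(2) c matrix_vector_mul_assoc matrix_vector_mul_lid)
  then show "P *v b = (C ** Mi ** (W ** P)) *v b"
    by (simp add: c matrix_vector_mul_assoc[symmetric])
qed

lemma right_deflating_range_subset:
  assumes "right_deflating A B (range ((*v) U))" "L ** (cpencil A B ** U) = mat 1"
  shows "range ((*v) (A ** U)) \<subseteq> range ((*v) (cpencil A B ** U))"
    and "range ((*v) (B ** U)) \<subseteq> range ((*v) (cpencil A B ** U))"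
proof -
  define X where "X = range ((*v) U)"
  define Y where "Y = {A *v x + B *v y | x y. x \<in> X \<and> y \<in> X}"
  define Z where "Z = range ((*v) (cpencil A B ** U))"
  have "Z \<subseteq> Y"
  proof
    fix z assume "z \<in> Z"
    then obtain b where "z = (cpencil A B ** U) *v b"
      by (auto simp: Z_def)
    then have "z = A *v (U *v b) + B *v (U *v (\<i> *s b))"
      by (simp add: cpencil_mult_vec vector_scalar_commute matrix_vector_mul_assoc[symmetric])
    then show "z \<in> Y"
      unfolding Y_def X_def by blast
  qed
  moreover have "vec.dim Y \<le> vec.dim Z"
  proof -
    have "L ** cpencil A B ** U = mat 1"
      using assms(2) by (simp add: matrix_mul_assoc)
    then have "vec.dim X = vec.dim Z"
      unfolding X_def Z_def using assms(2) by (simp add: dim_range_left_invertible)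
    then show ?thesis
      using assms(1) unfolding right_deflating_def X_def Y_def by simp
  qed
  moreover have "vec.span Z = Z"
    unfolding Z_def by (simp add: vec.span_eq_iff vec.subspace_image vec.subspace_UNIV)
  ultimately have "Y \<subseteq> Z"
    by (metis vec.dim_eq_span vec.span_superset)
  moreover have "A *v (U *v b) \<in> Y" "B *v (U *v b) \<in> Y" for b
  proof -
    have "A *v (U *v b) = A *v (U *v b) + B *v (U *v 0)"
      and "B *v (U *v b) = A *v (U *v 0) + B *v (U *v b)"
      by simp_all
    then show "A *v (U *v b) \<in> Y" "B *v (U *v b) \<in> Y"
      unfolding Y_def X_def by blast+
  qed
  ultimately show "range ((*v) (A ** U)) \<subseteq> Z" "range ((*v) (B ** U)) \<subseteq> Z"
    by (auto simp: matrix_vector_mul_assoc[symmetric])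
qed

lemma right_deflating_factorization:
  fixes A B :: "complex^'n^'n" and U :: "complex^'k^'n"
  assumes "definite_pencil A B" "cadj U ** U = mat 1" "right_deflating A B (range ((*v) U))"
  obtains K :: "complex^'k^'n"
    where "A ** U = K ** (cadj U ** A ** U)" "B ** U = K ** (cadj U ** B ** U)" "cadj U ** K = mat 1"
proof -
  define C where "C = cpencil A B"
  define M where "M = cadj U ** C ** U"
  have "crawford A B * (norm b)\<^sup>2 \<le> cmod (qform M b)" for b
    using crawford_le_qform[of A B "U *v b"]
    by (simp add: M_def C_def qform_compression norm_mult_vec_isometry[OF assms(2)])
  then have "M *v b = 0 \<Longrightarrow> b = 0" for b
    using assms(1) eq_0_of_qform_lower_bound unfolding definite_pencil_def by blast
  then obtain Mi where MiM: "Mi ** M = mat 1"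
    using matrix_left_invertible_ker by blast
  then have MMi: "M ** Mi = mat 1"
    using matrix_left_right_inverse by blast
  have Mi_left_inverse: "Mi ** (cadj U ** (C ** U)) = mat 1"
    using MiM by (simp add: M_def matrix_mul_assoc)
  have ranges: "range ((*v) (A ** U)) \<subseteq> range ((*v) (C ** U))"
    "range ((*v) (B ** U)) \<subseteq> range ((*v) (C ** U))"
    using right_deflating_range_subset[OF assms(3), of "Mi ** cadj U"] Mi_left_inverse
    by (simp_all add: C_def matrix_mul_assoc)
  show ?thesis
  proof (rule that)
    show "A ** U = (C ** U ** Mi) ** (cadj U ** A ** U)"
      and "B ** U = (C ** U ** Mi) ** (cadj U ** B ** U)"
      using ranges[THEN eq_mult_of_range_subset, OF Mi_left_inverse]
      by (simp_all add: matrix_mul_assoc)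
    show "cadj U ** (C ** U ** Mi) = mat 1"
      using MMi by (simp add: M_def matrix_mul_assoc)
  qed
qed

lemma cadj_mult_eq_compression_mult:
  assumes "hermitian P" "P ** U = K ** (cadj U ** P ** U)"
  shows "cadj U ** P = cadj U ** P ** U ** cadj K"
proof -
  have "cadj U ** P = cadj (P ** U)"
    using assms(1) by (simp add: cadj_mult hermitian_def)
  also have "\<dots> = cadj (cadj U ** P ** U) ** cadj K"
    by (simp add: assms(2) cadj_mult)
  also have "\<dots> = cadj U ** P ** U ** cadj K"
    using hermitian_congruence[OF assms(1), of U] unfolding hermitian_def by simp
  finally show ?thesis .
qed

lemma norm_cadj_factor_le:
  assumes "definite_pencil A B" "cadj U ** U = mat 1"
    and "A ** U = K ** (cadj U ** A ** U)" "B ** U = K ** (cadj U ** B ** U)"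
  shows "norm (cadj K *v y) \<le> sqrt (pencil_norm A B / crawford A B) * norm y"
proof -
  have hA: "hermitian A" and hB: "hermitian B" and gpos: "crawford A B > 0"
    using assms(1) by (simp_all add: definite_pencil_def)
  define x where "x = U *v (cadj K *v y)"
  define w where "w = y - x"
  have "cadj U *v (P *v w) = 0" if "hermitian P" "P ** U = K ** (cadj U ** P ** U)" for P
  proof -
    have "cadj U *v (P *v w) = (cadj U ** P) *v y - (cadj U ** P ** U ** cadj K) *v y"
      by (simp add: w_def x_def matrix_vector_mult_diff_distrib matrix_vector_mul_assoc
          matrix_mul_assoc)
    then show ?thesis
      using cadj_mult_eq_compression_mult[OF that] by simp
  qed
  then have orth: "cinner x (A *v w) = 0" "cinner x (B *v w) = 0"
    unfolding x_def using hA hB assms(3,4) by (simp_all add: cinner_adjoint)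
  have "crawford A B * (norm (cadj K *v y))\<^sup>2 \<le> crawford A B * ((norm x)\<^sup>2 + (norm w)\<^sup>2)"
    using gpos by (simp add: x_def norm_mult_vec_isometry[OF assms(2)])
  also have "\<dots> \<le> cmod (qform (cpencil A B) (x + w))"
    by (rule crawford_le_qform_orthogonal_sum[OF hA hB orth])
  also have "\<dots> \<le> pencil_norm A B * (norm y)\<^sup>2"
    using qform_cpencil_le_pencil_norm[OF hA hB] by (simp add: w_def)
  finally have "(norm (cadj K *v y))\<^sup>2 \<le> (sqrt (pencil_norm A B / crawford A B) * norm y)\<^sup>2"
    using gpos pencil_norm_nonneg[of A B] by (simp add: power_mult_distrib field_simps)
  then show ?thesis
    using gpos pencil_norm_nonneg[of A B] by (simp add: power2_le_iff_abs_le)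
qed

lemma norm_mult_le_of_norm_cadj_mult_le:
  assumes "0 \<le> r" "\<And>y. norm (cadj M *v y) \<le> r * norm y"
  shows "norm (M *v x) \<le> r * norm x"
proof (cases "M *v x = 0")
  case True
  then show ?thesis using assms(1) by simp
next
  case False
  have "(norm (M *v x))\<^sup>2 = Re (cinner x (cadj M *v (M *v x)))"
    by (simp add: cinner_self flip: cinner_adjoint)
  also have "\<dots> \<le> norm x * norm (cadj M *v (M *v x))"
    unfolding Re_cinner by (rule norm_cauchy_schwarz)
  also have "\<dots> \<le> norm x * (r * norm (M *v x))"
    by (rule mult_left_mono[OF assms(2)]) simp
  finally have "norm (M *v x) * norm (M *v x) \<le> (r * norm x) * norm (M *v x)"
    by (simp add: power2_eq_square mult_ac)
  then show ?thesis
    using False by simp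
qed

lemma specnorm_congruence_le:
  assumes "0 \<le> r" "\<And>y. norm (cadj K *v y) \<le> r * norm y"
  shows "specnorm (K ** E ** cadj K) \<le> r\<^sup>2 * specnorm E"
  unfolding specnorm_def[of "K ** E ** cadj K"]
proof (rule onorm_le)
  fix x
  have "norm ((K ** E ** cadj K) *v x) = norm (K *v (E *v (cadj K *v x)))"
    by (simp add: matrix_vector_mul_assoc matrix_mul_assoc)
  also have "\<dots> \<le> r * norm (E *v (cadj K *v x))"
    by (rule norm_mult_le_of_norm_cadj_mult_le[OF assms(1)]) (simp add: assms(2))
  also have "\<dots> \<le> r * (specnorm E * norm (cadj K *v x))"
    by (intro mult_left_mono norm_matrix_vector_le_specnorm assms(1))
  also have "\<dots> \<le> r * (specnorm E * (r * norm x))"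
    by (intro mult_left_mono assms specnorm_nonneg)
  finally show "norm ((K ** E ** cadj K) *v x) \<le> r\<^sup>2 * specnorm E * norm x"
    by (simp add: power2_eq_square mult_ac)
qed

lemma congruence_perturbation_mult_vec:
  assumes "P ** U = K ** (cadj U ** P ** U)" "cadj K ** U = mat 1"
  shows "(P + K ** G ** cadj K) *v (U *v u) = K *v ((cadj U ** P ** U + G) *v u)"
proof -
  have "P *v (U *v u) = K *v ((cadj U ** P ** U) *v u)"
    using assms(1) by (metis matrix_vector_mul_assoc)
  moreover have "(K ** G ** cadj K) *v (U *v u) = K *v (G *v u)"
    using assms(2) by (metis matrix_mul_assoc matrix_vector_mul_assoc matrix_mul_rid)
  ultimately show ?thesis
    by (simp add: matrix_vector_mult_add_rdistrib matrix_vector_right_distrib)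
qed

lemma sym_pseudospec_subset_of_factorization:
  fixes A B :: "complex^'n^'n" and U K :: "complex^'k^'n"
  assumes "A ** U = K ** (cadj U ** A ** U)" "B ** U = K ** (cadj U ** B ** U)"
    and "cadj U ** K = mat 1"
    and "0 \<le> r" "\<And>y. norm (cadj K *v y) \<le> r * norm y" "r\<^sup>2 * \<epsilon>' \<le> \<epsilon>"
  shows "sym_pseudospec \<epsilon>' (cadj U ** A ** U) (cadj U ** B ** U) \<subseteq> sym_pseudospec \<epsilon> A B"
proof
  fix z
  assume "z \<in> sym_pseudospec \<epsilon>' (cadj U ** A ** U) (cadj U ** B ** U)"
  then obtain u E F where u: "u \<noteq> 0" and herm: "hermitian E" "hermitian F"
    and small: "sqrt ((specnorm E)\<^sup>2 + (specnorm F)\<^sup>2) \<le> \<epsilon>'"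
    and eig: "(cadj U ** A ** U + E) *v u = z *s ((cadj U ** B ** U + F) *v u)"
    unfolding sym_pseudospec_def by blast
  have KU: "cadj K ** U = mat 1"
    using arg_cong[OF assms(3), of cadj] by (simp add: cadj_mult)
  have "U *v u \<noteq> 0"
    using u KU by (metis matrix_vector_mul_assoc matrix_vector_mul_lid matrix_vector_mult_0_right)
  moreover have "hermitian (K ** E ** cadj K)" "hermitian (K ** F ** cadj K)"
    using herm[THEN hermitian_congruence, of "cadj K"] by simp_all
  moreover have "(A + K ** E ** cadj K) *v (U *v u) = z *s ((B + K ** F ** cadj K) *v (U *v u))"
    using congruence_perturbation_mult_vec[OF assms(1) KU, of E]
      congruence_perturbation_mult_vec[OF assms(2) KU, of F]
    by (simp add: eig vector_scalar_commute)
  moreover have "sqrt ((specnorm (K ** E ** cadj K))\<^sup>2 + (specnorm (K ** F ** cadj K))\<^sup>2) \<le> \<epsilon>"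
  proof -
    have "sqrt ((specnorm (K ** E ** cadj K))\<^sup>2 + (specnorm (K ** F ** cadj K))\<^sup>2)
        \<le> sqrt ((r\<^sup>2 * specnorm E)\<^sup>2 + (r\<^sup>2 * specnorm F)\<^sup>2)"
      by (intro real_sqrt_le_mono add_mono power_mono specnorm_congruence_le assms specnorm_nonneg)
    also have "\<dots> = sqrt ((r\<^sup>2)\<^sup>2 * ((specnorm E)\<^sup>2 + (specnorm F)\<^sup>2))"
      by (simp only: power_mult_distrib distrib_left)
    also have "\<dots> = r\<^sup>2 * sqrt ((specnorm E)\<^sup>2 + (specnorm F)\<^sup>2)"
      by (simp only: real_sqrt_mult real_sqrt_abs abs_power2)
    also have "\<dots> \<le> r\<^sup>2 * \<epsilon>'"
      by (rule mult_left_mono[OF small]) simp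
    finally show ?thesis
      using assms(6) by linarith
  qed
  ultimately show "z \<in> sym_pseudospec \<epsilon> A B"
    unfolding sym_pseudospec_def by blast
qed

theorem lemma4p1:
  fixes A B :: "complex^'n^'n" and U :: "complex^'k^'n" and \<epsilon> \<epsilon>' :: real
  assumes "definite_pencil A B"
    and "cadj U ** U = mat 1"
    and "right_deflating A B (range (\<lambda>y. U *v y))"
    and "\<epsilon> > 0"
    and "0 < \<epsilon>'"
    and "\<epsilon>' \<le> \<epsilon> * inverse (1 + pencil_norm A B / crawford A B)"
  shows "sym_pseudospec \<epsilon>' (cadj U ** A ** U) (cadj U ** B ** U) \<subseteq> sym_pseudospec \<epsilon> A B"
proof -
  define c where "c = pencil_norm A B / crawford A B"
  have "c \<ge> 0"
    using assms(1) pencil_norm_nonneg[of A B] by (simp add: c_def definite_pencil_def)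
  obtain K where factor: "A ** U = K ** (cadj U ** A ** U)" "B ** U = K ** (cadj U ** B ** U)"
    and K_right_inverse: "cadj U ** K = mat 1"
    using right_deflating_factorization[OF assms(1,2)] assms(3) by blast
  have bound: "norm (cadj K *v y) \<le> sqrt c * norm y" for y
    unfolding c_def by (rule norm_cadj_factor_le[OF assms(1,2) factor])
  have small: "(sqrt c)\<^sup>2 * \<epsilon>' \<le> \<epsilon>"
  proof -
    have "\<epsilon>' * (1 + c) \<le> \<epsilon>"
      using assms(6) \<open>c \<ge> 0\<close> unfolding c_def[symmetric] by (simp add: field_simps)
    then show ?thesis
      using assms(5) \<open>c \<ge> 0\<close> by (simp add: algebra_simps)
  qed
  show ?thesis
    by (rule sym_pseudospec_subset_of_factorization[OF factor K_right_inverse _ bound small])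
      (simp add: \<open>c \<ge> 0\<close>)
qed

end
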